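(* In the setting of the context, there exist constants $C>0$ and $M_0>\rho$ such that for all $M\geq M_0$, $$|\mathcal N(\eta)|\geq Ce^{kM},\qquad \mathcal N(\eta):=\partial_w\Theta^+(\eta)\partial_z\Theta^-(\eta)-\partial_z\Theta^+(\eta)\partial_w\Theta^-(\eta).$$
   Context: Let $V\in C^\infty(\mathbb R)$ be real-valued with $V=V_{\rm per}+V_{\rm def}$, where $V_{\rm per}$ is $1$-periodic and $V_{\rm def}(x)=0$ for $|x|>\rho$, some $\rho\geq0$. Suppose $(-\frac{d^2}{dx^2}+V)\Phi=E\Phi$ with $E>0$, $0\neq\Phi\in L^2(\mathbb R)$. For $\zeta=(w,z)\in\mathbb C^2$ let $u_\zeta,v_\zeta$ solve $-y''+(V-z)y=0$ on $\mathbb R$ with: if $\Phi(0)\neq0$ (normalized $\Phi(0)=1$), $u_\zeta(0)=1,u_\zeta'(0)=w,v_\zeta(0)=-w/(1+w^2),v_\zeta'(0)=1/(1+w^2)$, $\eta=(\Phi'(0),E)$; if $\Phi(0)=0$ (normalized $\Phi'(0)=1$), $u_\zeta(0)=-w,u_\zeta'(0)=1,v_\zeta(0)=-1/(1+w^2),v_\zeta'(0)=-w/(1+w^2)$, $\eta=(0,E)$. So $u_\eta=\Phi$. Fix $C_0,k>0$ with $|u_\eta|,|u_\eta'|\leq C_0e^{-k|x|}$ and $|v_\eta|,|v_\eta'|\leq C_0e^{k|x|}$ on $\mathbb R$. For $M>\rho$: $\Theta^\pm(\zeta):=u_\zeta'(\pm M)-i\sqrt z\,u_\zeta(\pm M)$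 (principal branch of the square root). *)

theory Defs
  imports "HOL-Analysis.Analysis"
begin

definition smooth_real :: "(real \<Rightarrow> real) \<Rightarrow> bool" where
  "smooth_real f \<longleftrightarrow> (\<exists>D :: nat \<Rightarrow> real \<Rightarrow> real. D 0 = f \<and>
      (\<forall>n x. (D n has_real_derivative D (Suc n) x) (at x)))"

definition schr_sol :: "(real \<Rightarrow> real) \<Rightarrow> complex \<Rightarrow> (real \<Rightarrow> complex) \<Rightarrow> (real \<Rightarrow> complex) \<Rightarrow> bool" where
  "schr_sol V z y y' \<longleftrightarrow> (\<forall>x. (y has_vector_derivative y' x) (at x) \<and>
      (y' has_vector_derivative ((complex_of_real (V x) - z) * y x)) (at x))"

text \<open>Theta^{+-}(w,z) = u_zeta'(+-M) - i sqrt z u_zeta(+-M), principal square root.\<close>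
definition Theta :: "(complex \<Rightarrow> complex \<Rightarrow> real \<Rightarrow> complex) \<Rightarrow> (complex \<Rightarrow> complex \<Rightarrow> real \<Rightarrow> complex)
    \<Rightarrow> real \<Rightarrow> complex \<Rightarrow> complex \<Rightarrow> complex" where
  "Theta u u' x w z = u' w z x - \<i> * csqrt z * u w z x"

definition Ncal :: "(complex \<Rightarrow> complex \<Rightarrow> complex) \<Rightarrow> (complex \<Rightarrow> complex \<Rightarrow> complex)
    \<Rightarrow> complex \<Rightarrow> complex \<Rightarrow> complex" where
  "Ncal Tp Tm w0 z0 =
     deriv (\<lambda>w. Tp w z0) w0 * deriv (\<lambda>z. Tm w0 z) z0
   - deriv (\<lambda>z. Tp w0 z) z0 * deriv (\<lambda>w. Tm w z0) w0"

end

theory Submission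
  imports Defs
begin

(* Write u0 = u(w_eta, E) (the decaying eigenfunction) and phi for the solution at energy E with
   Wronskian W(u0, phi) = 1.  The family is affine in w, u(w, E) = u0 + (w - w_eta) phi, so
   d_w Theta(+-M) = Theta_phi(+-M) := phi'(+-M) - i sqrt E phi(+-M); and by variation of
   parameters d_z u = a u0 + b phi with a' = u0 phi, b' = - u0^2.  This gives
     N(eta) = (int_{-M}^{M} u0^2) Theta_phi(M) Theta_phi(-M) + (terms pairing phi with u0).
   Since u0 = O(e^{-kM}), the identity W(u0, phi) = 1 forces |Theta_phi(+-M)| >= c e^{kM}, while
   phi = v + const * u0 is O(e^{kM}); the remaining terms are then O(M), so
   |N(eta)| >= c' e^{2kM} - O(M) >= e^{kM} for large M.  Differentiability in z is obtained
   from Gronwall-type energy estimates. *)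

section \<open>Energy estimates for \<open>y'' = q y + g\<close>\<close>

lemma energy_has_derivative_bound:
  fixes y p q g :: "real \<Rightarrow> complex"
  assumes y: "(y has_vector_derivative p t) (at t)"
    and p: "(p has_vector_derivative (q t * y t + g t)) (at t)"
    and q: "norm (q t) \<le> L" and g: "norm (g t) \<le> G" and L: "0 \<le> L"
  obtains d where "((\<lambda>t. norm (y t)^2 + norm (p t)^2) has_real_derivative d) (at t)"
    and "\<bar>d\<bar> \<le> (L + 2) * (norm (y t)^2 + norm (p t)^2) + G^2"
proof
  define P where "P = q t * y t + g t"
  show "((\<lambda>t. norm (y t)^2 + norm (p t)^2) has_real_derivative
      2 * (y t \<bullet> p t) + 2 * (p t \<bullet> P)) (at t)"
    using y p
    unfolding P_def power2_norm_eq_inner has_real_derivative_iff_has_vector_derivative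
      has_vector_derivative_def
    by (auto intro!: derivative_eq_intros simp: inner_commute algebra_simps)
  have "norm P \<le> L * norm (y t) + G"
    using norm_triangle_ineq[of "q t * y t" "g t"] mult_right_mono[OF q, of "norm (y t)"] g
    unfolding P_def norm_mult by simp
  then have "\<bar>2 * (y t \<bullet> p t) + 2 * (p t \<bullet> P)\<bar>
      \<le> 2 * (norm (y t) * norm (p t)) + 2 * (norm (p t) * (L * norm (y t) + G))"
    using Cauchy_Schwarz_ineq2[of "y t" "p t"] Cauchy_Schwarz_ineq2[of "p t" P]
      mult_left_mono[of "norm P" _ "norm (p t)"] by (smt (verit) norm_ge_zero)
  also have "\<dots> \<le> (L + 2) * (norm (y t)^2 + norm (p t)^2) + G^2"
    using sum_squares_bound[of "norm (y t)" "norm (p t)"] sum_squares_bound[of "norm (p t)" G]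
      mult_left_mono[OF sum_squares_bound[of "norm (y t)" "norm (p t)"] L]
    by (simp add: algebra_simps, smt (verit) zero_le_power2)
  finally show "\<bar>2 * (y t \<bullet> p t) + 2 * (p t \<bullet> P)\<bar>
      \<le> (L + 2) * (norm (y t)^2 + norm (p t)^2) + G^2" .
qed

lemma energy_estimate_nonneg:
  fixes y p q g :: "real \<Rightarrow> complex"
  assumes x: "0 \<le> x"
    and y: "\<And>t. t \<in> {0..x} \<Longrightarrow> (y has_vector_derivative p t) (at t)"
    and p: "\<And>t. t \<in> {0..x} \<Longrightarrow> (p has_vector_derivative (q t * y t + g t)) (at t)"
    and q: "\<And>t. t \<in> {0..x} \<Longrightarrow> norm (q t) \<le> L"
    and g: "\<And>t. t \<in> {0..x} \<Longrightarrow> norm (g t) \<le> G"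
    and L: "0 \<le> L" and y0: "y 0 = 0" and p0: "p 0 = 0"
  shows "norm (y x)^2 + norm (p x)^2 \<le> G^2 * x * exp ((L + 2) * x)"
proof -
  define f where "f t = norm (y t)^2 + norm (p t)^2" for t
  define c where "c = L + 2"
  \<comment> \<open>Gronwall: \<open>f t * exp (- c * t) - G^2 * t\<close> is nonincreasing\<close>
  have "f x * exp (- c * x) - G^2 * x \<le> f 0 * exp (- c * 0) - G^2 * 0"
  proof (rule DERIV_nonpos_imp_nonincreasing[OF x])
    fix t assume t: "0 \<le> t" "t \<le> x"
    then have "t \<in> {0..x}" by simp
    from energy_has_derivative_bound[of y p t q g L G,
        OF y[OF this] p[OF this] q[OF this] g[OF this] L]
    obtain d where d: "(f has_real_derivative d) (at t)" "\<bar>d\<bar> \<le> c * f t + G^2"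
      unfolding f_def c_def by blast
    have "exp (- c * t) \<le> 1" using L t by (simp add: c_def mult_nonpos_nonneg)
    then have "(d - c * f t) * exp (- c * t) \<le> G^2"
      using d(2) mult_right_mono[of "d - c * f t" "G^2" "exp (- c * t)"]
      by (smt (verit) exp_gt_zero mult_left_le zero_le_power2)
    moreover have "((\<lambda>t. f t * exp (- c * t) - G^2 * t) has_real_derivative
        (d - c * f t) * exp (- c * t) - G^2) (at t)"
      by (auto intro!: derivative_eq_intros d(1) simp: algebra_simps)
    ultimately show "\<exists>d'. ((\<lambda>t. f t * exp (- c * t) - G^2 * t) has_real_derivative d') (at t)
        \<and> d' \<le> 0"
      by force
  qed
  then have "f x * exp (- c * x) * exp (c * x) \<le> G^2 * x * exp (c * x)"
    using y0 p0 by (intro mult_right_mono) (auto simp: f_def)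
  then show ?thesis by (simp add: f_def c_def mult.assoc algebra_simps flip: exp_add)
qed

lemma energy_estimate:
  fixes y p q g :: "real \<Rightarrow> complex"
  assumes y: "\<And>t. \<bar>t\<bar> \<le> X \<Longrightarrow> (y has_vector_derivative p t) (at t)"
    and p: "\<And>t. \<bar>t\<bar> \<le> X \<Longrightarrow> (p has_vector_derivative (q t * y t + g t)) (at t)"
    and q: "\<And>t. \<bar>t\<bar> \<le> X \<Longrightarrow> norm (q t) \<le> L"
    and g: "\<And>t. \<bar>t\<bar> \<le> X \<Longrightarrow> norm (g t) \<le> G"
    and L: "0 \<le> L" and y0: "y 0 = 0" and p0: "p 0 = 0" and x: "\<bar>x\<bar> \<le> X"
  shows "norm (y x)^2 + norm (p x)^2 \<le> G^2 * \<bar>x\<bar> * exp ((L + 2) * \<bar>x\<bar>)"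
proof (cases "0 \<le> x")
  case True
  then show ?thesis
    using energy_estimate_nonneg[of x y p q g L G] y p q g L y0 p0 x by simp
next
  case False
  \<comment> \<open>the reflection \<open>t \<mapsto> - t\<close> preserves the form of the equation\<close>
  define yr where "yr = (\<lambda>t. y (- t))"
  define pr where "pr = (\<lambda>t. - p (- t))"
  have "norm (yr (- x))^2 + norm (pr (- x))^2 \<le> G^2 * (- x) * exp ((L + 2) * (- x))"
  proof (rule energy_estimate_nonneg[where q = "\<lambda>t. q (- t)" and g = "\<lambda>t. g (- t)"])
    fix t assume "t \<in> {0..- x}"
    then have t: "\<bar>- t\<bar> \<le> X" using x by auto
    have neg: "(uminus has_vector_derivative - 1) (at t)" for t :: real
      by (auto intro!: derivative_eq_intros)
    show "(yr has_vector_derivative pr t) (at t)"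
      using vector_diff_chain_at[OF neg y[OF t]] by (simp add: yr_def pr_def o_def)
    show "(pr has_vector_derivative q (- t) * yr t + g (- t)) (at t)"
      using has_vector_derivative_minus[OF vector_diff_chain_at[OF neg p[OF t]]]
      by (simp add: yr_def pr_def o_def add.commute)
    show "norm (q (- t)) \<le> L" "norm (g (- t)) \<le> G" using q[OF t] g[OF t] by auto
  qed (use False L y0 p0 in \<open>auto simp: yr_def pr_def\<close>)
  then show ?thesis using False by (simp add: yr_def pr_def)
qed

lemma linear_ode_norm_bound:
  fixes y p q g :: "real \<Rightarrow> complex"
  assumes y: "\<And>t. \<bar>t\<bar> \<le> X \<Longrightarrow> (y has_vector_derivative p t) (at t)"
    and p: "\<And>t. \<bar>t\<bar> \<le> X \<Longrightarrow> (p has_vector_derivative (q t * y t + g t)) (at t)"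
    and q: "\<And>t. \<bar>t\<bar> \<le> X \<Longrightarrow> norm (q t) \<le> L"
    and g: "\<And>t. \<bar>t\<bar> \<le> X \<Longrightarrow> norm (g t) \<le> G"
    and L: "0 \<le> L" and y0: "y 0 = 0" and p0: "p 0 = 0" and x: "\<bar>x\<bar> \<le> X"
  shows "norm (y x) \<le> G * sqrt (X * exp ((L + 2) * X))"
    and "norm (p x) \<le> G * sqrt (X * exp ((L + 2) * X))"
proof -
  have G: "0 \<le> G" using g[of 0] x by (smt (verit) norm_ge_zero)
  have "norm (y x)^2 + norm (p x)^2 \<le> G^2 * \<bar>x\<bar> * exp ((L + 2) * \<bar>x\<bar>)"
    by (rule energy_estimate[OF y p q g L y0 p0 x])
  also have "\<dots> \<le> G^2 * (X * exp ((L + 2) * X))"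
    using x L by (simp add: mult.assoc mult_left_mono mult_mono)
  also have "\<dots> = (G * sqrt (X * exp ((L + 2) * X)))^2"
    using x by (simp add: power_mult_distrib)
  finally have bound: "norm (y x)^2 + norm (p x)^2 \<le> (G * sqrt (X * exp ((L + 2) * X)))^2" .
  have rhs: "0 \<le> G * sqrt (X * exp ((L + 2) * X))" using G x by simp
  show "norm (y x) \<le> G * sqrt (X * exp ((L + 2) * X))"
    using bound rhs by (smt (verit) power2_le_imp_le zero_le_power2)
  show "norm (p x) \<le> G * sqrt (X * exp ((L + 2) * X))"
    using bound rhs by (smt (verit) power2_le_imp_le zero_le_power2)
qed

section \<open>Solutions of the Schroedinger equation\<close>

lemma smooth_real_imp_continuous: "smooth_real V \<Longrightarrow> continuous_on UNIV V"
  unfolding smooth_real_def by (metis DERIV_isCont continuous_at_imp_continuous_on)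

lemma continuous_on_potential:
  "continuous_on UNIV V \<Longrightarrow> continuous_on UNIV (\<lambda>t. complex_of_real (V t) - z)"
  by (intro continuous_intros) (auto intro: continuous_on_compose2[OF continuous_on_of_real])

lemma continuous_on_bound_abs_le:
  fixes f :: "real \<Rightarrow> 'a::real_normed_vector"
  assumes "continuous_on UNIV f"
  obtains B where "0 \<le> B" "\<And>t. \<bar>t\<bar> \<le> X \<Longrightarrow> norm (f t) \<le> B"
  using continuous_on_compact_bound[OF compact_Icc continuous_on_subset[OF assms], of "- X" X]
  by (metis abs_le_iff atLeastAtMost_iff minus_le_iff subset_UNIV)

lemma schr_sol_continuous:
  assumes "schr_sol V z y y'"
  shows "continuous_on S y" "continuous_on S y'"
  using assms unfolding schr_sol_def
  by (auto intro!: continuous_at_imp_continuous_on has_vector_derivative_continuous)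

lemma schr_sol_lincomb:
  assumes "schr_sol V z y1 y1'" "schr_sol V z y2 y2'"
  shows "schr_sol V z (\<lambda>t. a * y1 t + b * y2 t) (\<lambda>t. a * y1' t + b * y2' t)"
  using assms unfolding schr_sol_def
  by (auto intro!: derivative_eq_intros simp: algebra_simps)

lemma schr_sol_unique:
  assumes V: "continuous_on UNIV V"
    and y: "schr_sol V z y y'" and f: "schr_sol V z f f'"
    and init: "y 0 = f 0" "y' 0 = f' 0"
  shows "y x = f x \<and> y' x = f' x"
proof -
  define d where "d = (\<lambda>t. y t - f t)"
  define d' where "d' = (\<lambda>t. y' t - f' t)"
  have d: "schr_sol V z d d'"
    using schr_sol_lincomb[OF y f, of 1 "- 1"] by (simp add: d_def d'_def)
  obtain L where L: "0 \<le> L" "\<And>t. \<bar>t\<bar> \<le> \<bar>x\<bar> \<Longrightarrow> norm (complex_of_real (V t) - z) \<le> L"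
    using continuous_on_bound_abs_le[OF continuous_on_potential[OF V]] by blast
  have ode: "(d has_vector_derivative d' t) (at t)"
    "(d' has_vector_derivative (complex_of_real (V t) - z) * d t + 0) (at t)" for t
    using d by (simp_all add: schr_sol_def)
  have "norm (d x) \<le> 0 * sqrt (\<bar>x\<bar> * exp ((L + 2) * \<bar>x\<bar>))"
    and "norm (d' x) \<le> 0 * sqrt (\<bar>x\<bar> * exp ((L + 2) * \<bar>x\<bar>))"
    by (rule linear_ode_norm_bound[where y = d and p = d' and g = "\<lambda>_. 0"
          and q = "\<lambda>t. complex_of_real (V t) - z"];
        use ode L init in \<open>simp add: d_def d'_def\<close>)+
  then show ?thesis by (simp add: d_def d'_def)
qed

lemma schr_sol_real:
  assumes V: "continuous_on UNIV V" and y: "schr_sol V z y y'" and z: "Im z = 0"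
    and init: "Im (y 0) = 0" "Im (y' 0) = 0"
  shows "Im (y x) = 0 \<and> Im (y' x) = 0"
proof -
  have "cnj z = z" using z by (simp add: complex_eq_iff)
  then have "schr_sol V z (\<lambda>t. cnj (y t)) (\<lambda>t. cnj (y' t))"
    using y unfolding schr_sol_def by (auto intro!: derivative_eq_intros)
  from schr_sol_unique[OF V this y] init have "cnj (y x) = y x \<and> cnj (y' x) = y' x"
    by (simp add: complex_eq_iff)
  then show ?thesis by (simp add: complex_eq_iff)
qed

lemma schr_sol_wronskian_const:
  assumes "schr_sol V z y1 y1'" "schr_sol V z y2 y2'"
  shows "y1 t * y2' t - y1' t * y2 t = y1 0 * y2' 0 - y1' 0 * y2 0"
proof -
  have "((\<lambda>t. y1 t * y2' t - y1' t * y2 t) has_vector_derivative 0) (at t within UNIV)" for t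
    using assms unfolding schr_sol_def by (auto intro!: derivative_eq_intros simp: algebra_simps)
  from has_vector_derivative_zero_constant[OF convex_UNIV this] show ?thesis by (metis UNIV_I)
qed

lemma schr_sol_expansion:
  assumes V: "continuous_on UNIV V"
    and u: "schr_sol V z u u'" and v: "schr_sol V z v v'" and y: "schr_sol V z y y'"
    and W: "u 0 * v' 0 - u' 0 * v 0 = 1"
  defines "a \<equiv> y 0 * v' 0 - y' 0 * v 0" and "b \<equiv> u 0 * y' 0 - u' 0 * y 0"
  shows "y x = a * u x + b * v x \<and> y' x = a * u' x + b * v' x"
proof (rule schr_sol_unique[OF V y schr_sol_lincomb[OF u v]])
  have "a * u 0 + b * v 0 = y 0 * (u 0 * v' 0 - u' 0 * v 0)"
    and "a * u' 0 + b * v' 0 = y' 0 * (u 0 * v' 0 - u' 0 * v 0)"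
    unfolding a_def b_def by (simp_all add: algebra_simps)
  then show "y 0 = a * u 0 + b * v 0" "y' 0 = a * u' 0 + b * v' 0"
    using W by simp_all
qed

section \<open>Dependence on the spectral parameter\<close>

lemma has_field_derivative_of_quadratic_remainder:
  fixes f :: "complex \<Rightarrow> complex"
  assumes "\<And>z. norm (z - z0) \<le> 1 \<Longrightarrow> norm (f z - f z0 - (z - z0) * D) \<le> norm (z - z0)^2 * K"
  shows "(f has_field_derivative D) (at z0)"
  unfolding has_field_derivative_iff
proof (rule LIM_zero_cancel, rule Lim_null_comparison)
  show "\<forall>\<^sub>F z in at z0. norm ((f z - f z0) / (z - z0) - D) \<le> norm (z - z0) * K"
    unfolding eventually_at
  proof (intro exI[of _ 1] conjI ballI impI)
    fix z assume z: "z \<noteq> z0 \<and> dist z z0 < 1"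
    then have "(f z - f z0) / (z - z0) - D = (f z - f z0 - (z - z0) * D) / (z - z0)"
      by (simp add: field_simps)
    also have "norm \<dots> \<le> norm (z - z0)^2 * K / norm (z - z0)"
      unfolding norm_divide using assms[of z] z by (intro divide_right_mono) (auto simp: dist_norm)
    also have "\<dots> = norm (z - z0) * K"
      using z by (simp add: power2_eq_square)
    finally show "norm ((f z - f z0) / (z - z0) - D) \<le> norm (z - z0) * K" .
  qed simp
  show "((\<lambda>z. norm (z - z0) * K) \<longlongrightarrow> 0) (at z0)"
    by (auto intro!: tendsto_eq_intros)
qed

lemma schr_sol_lipschitz_in_z:
  fixes U U' :: "complex \<Rightarrow> real \<Rightarrow> complex"
  assumes V: "continuous_on UNIV V" and sol: "\<And>z. schr_sol V z (U z) (U' z)"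
    and init: "\<And>z. U z 0 = U z0 0" "\<And>z. U' z 0 = U' z0 0"
  obtains L K where "0 \<le> L"
    and "\<And>z t. norm (z - z0) \<le> 1 \<Longrightarrow> \<bar>t\<bar> \<le> X \<Longrightarrow> norm (complex_of_real (V t) - z) \<le> L"
    and "\<And>z x. norm (z - z0) \<le> 1 \<Longrightarrow> \<bar>x\<bar> \<le> X \<Longrightarrow>
           norm (U z x - U z0 x) \<le> norm (z - z0) * K \<and> norm (U' z x - U' z0 x) \<le> norm (z - z0) * K"
proof -
  obtain B where B: "0 \<le> B" "\<And>t. \<bar>t\<bar> \<le> X \<Longrightarrow> norm (complex_of_real (V t) - z0) \<le> B"
    using continuous_on_bound_abs_le[OF continuous_on_potential[OF V]] by blast
  obtain Bu where Bu: "0 \<le> Bu" "\<And>t. \<bar>t\<bar> \<le> X \<Longrightarrow> norm (U z0 t) \<le> Bu"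
    using continuous_on_bound_abs_le[OF schr_sol_continuous(1)[OF sol]] by blast
  define L where "L = B + 1"
  define K where "K = Bu * sqrt (X * exp ((L + 2) * X))"
  have L: "norm (complex_of_real (V t) - z) \<le> L" if "norm (z - z0) \<le> 1" "\<bar>t\<bar> \<le> X" for z t
    using norm_triangle_ineq[of "complex_of_real (V t) - z0" "z0 - z"] B(2)[OF that(2)] that(1)
    by (simp add: L_def norm_minus_commute)
  have "norm (U z x - U z0 x) \<le> norm (z - z0) * K \<and> norm (U' z x - U' z0 x) \<le> norm (z - z0) * K"
    if z: "norm (z - z0) \<le> 1" and x: "\<bar>x\<bar> \<le> X" for z x
  proof -
    have ode: "((\<lambda>t. U z t - U z0 t) has_vector_derivative U' z t - U' z0 t) (at t)"
      "((\<lambda>t. U' z t - U' z0 t) has_vector_derivative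
         (complex_of_real (V t) - z) * (U z t - U z0 t) + - (z - z0) * U z0 t) (at t)" for t
      using sol[of z] sol[of z0] unfolding schr_sol_def
      by (auto intro!: derivative_eq_intros simp: algebra_simps)
    have src: "norm (- (z - z0) * U z0 t) \<le> norm (z - z0) * Bu" if "\<bar>t\<bar> \<le> X" for t
      unfolding norm_mult norm_minus_cancel using Bu(2)[OF that] by (simp add: mult_left_mono)
    have "norm (U z x - U z0 x) \<le> (norm (z - z0) * Bu) * sqrt (X * exp ((L + 2) * X))"
      and "norm (U' z x - U' z0 x) \<le> (norm (z - z0) * Bu) * sqrt (X * exp ((L + 2) * X))"
      by (rule linear_ode_norm_bound[where y = "\<lambda>t. U z t - U z0 t" and p = "\<lambda>t. U' z t - U' z0 t"
            and q = "\<lambda>t. complex_of_real (V t) - z" and g = "\<lambda>t. - (z - z0) * U z0 t"];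
          use ode src L[OF z] init x B(1) in \<open>simp add: L_def\<close>)+
    then show ?thesis by (simp add: K_def mult.assoc)
  qed
  moreover have "0 \<le> L" using B by (simp add: L_def)
  ultimately show thesis using that L by blast
qed

lemma schr_sol_has_field_derivative_z:
  fixes U U' :: "complex \<Rightarrow> real \<Rightarrow> complex" and \<psi> \<psi>' :: "real \<Rightarrow> complex"
  assumes V: "continuous_on UNIV V" and sol: "\<And>z. schr_sol V z (U z) (U' z)"
    and init: "\<And>z. U z 0 = U z0 0" "\<And>z. U' z 0 = U' z0 0"
    and \<psi>: "\<And>t. \<bar>t\<bar> \<le> X \<Longrightarrow> (\<psi> has_vector_derivative \<psi>' t) (at t)"
    and \<psi>': "\<And>t. \<bar>t\<bar> \<le> X \<Longrightarrow>
      (\<psi>' has_vector_derivative (complex_of_real (V t) - z0) * \<psi> t - U z0 t) (at t)"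
    and \<psi>0: "\<psi> 0 = 0" "\<psi>' 0 = 0" and x: "\<bar>x\<bar> \<le> X"
  shows "((\<lambda>z. U z x) has_field_derivative \<psi> x) (at z0)"
    and "((\<lambda>z. U' z x) has_field_derivative \<psi>' x) (at z0)"
proof -
  obtain L K where L: "0 \<le> L"
    and V_bound: "\<And>t. \<bar>t\<bar> \<le> X \<Longrightarrow> norm (complex_of_real (V t) - z0) \<le> L"
    and lip: "\<And>z t. norm (z - z0) \<le> 1 \<Longrightarrow> \<bar>t\<bar> \<le> X \<Longrightarrow>
      norm (U z t - U z0 t) \<le> norm (z - z0) * K \<and> norm (U' z t - U' z0 t) \<le> norm (z - z0) * K"
    using schr_sol_lipschitz_in_z[OF V sol init, of X]
    by (metis norm_zero right_minus_eq zero_le_one)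
  define S where "S = K * sqrt (X * exp ((L + 2) * X))"
  have "norm (U z x - U z0 x - (z - z0) * \<psi> x) \<le> norm (z - z0)^2 * S
      \<and> norm (U' z x - U' z0 x - (z - z0) * \<psi>' x) \<le> norm (z - z0)^2 * S"
    if z: "norm (z - z0) \<le> 1" for z
  proof -
    \<comment> \<open>the first-order remainder solves the equation at \<open>z0\<close> with source
      \<open>- (z - z0) * (U z - U z0)\<close>, which is quadratically small by Lipschitz continuity\<close>
    have ode: "((\<lambda>t. U z t - U z0 t - (z - z0) * \<psi> t) has_vector_derivative
         U' z t - U' z0 t - (z - z0) * \<psi>' t) (at t)"
      "((\<lambda>t. U' z t - U' z0 t - (z - z0) * \<psi>' t) has_vector_derivative
         (complex_of_real (V t) - z0) * (U z t - U z0 t - (z - z0) * \<psi> t)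
         + - (z - z0) * (U z t - U z0 t)) (at t)" if "\<bar>t\<bar> \<le> X" for t
      using sol[of z] sol[of z0] \<psi>[OF that] \<psi>'[OF that] unfolding schr_sol_def
      by (auto intro!: derivative_eq_intros simp: algebra_simps)
    have src: "norm (- (z - z0) * (U z t - U z0 t)) \<le> norm (z - z0)^2 * K" if "\<bar>t\<bar> \<le> X" for t
      using lip[OF z that] unfolding norm_mult norm_minus_cancel
      by (simp add: power2_eq_square mult.assoc mult_left_mono)
    show ?thesis
      unfolding S_def mult.assoc[symmetric]
      by (intro conjI; rule linear_ode_norm_bound[where g = "\<lambda>t. - (z - z0) * (U z t - U z0 t)"
            and y = "\<lambda>t. U z t - U z0 t - (z - z0) * \<psi> t"
            and p = "\<lambda>t. U' z t - U' z0 t - (z - z0) * \<psi>' t"];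
          use ode src V_bound L init \<psi>0 x in simp)
  qed
  then show "((\<lambda>z. U z x) has_field_derivative \<psi> x) (at z0)"
    and "((\<lambda>z. U' z x) has_field_derivative \<psi>' x) (at z0)"
    by (auto intro: has_field_derivative_of_quadratic_remainder)
qed

lemma has_vector_derivative_integral_from:
  fixes f :: "real \<Rightarrow> 'a::banach"
  assumes "continuous_on UNIV f" and "\<bar>t\<bar> < R"
  shows "((\<lambda>t. integral {- R..t} f) has_vector_derivative f t) (at t)"
proof -
  have "((\<lambda>t. integral {- R..t} f) has_vector_derivative f t) (at t within {- R..R})"
    using integral_has_vector_derivative[OF continuous_on_subset[OF assms(1)], of "- R" R t]
      assms(2)
    by (simp add: abs_less_iff)
  then have "((\<lambda>t. integral {- R..t} f) has_vector_derivative f t) (at t within {- R<..<R})"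
    by (rule has_vector_derivative_within_subset) auto
  then show ?thesis
    using assms(2) by (subst (asm) has_vector_derivative_within_open) auto
qed

lemma variation_of_parameters:
  assumes u: "schr_sol V z u u'" and \<phi>: "schr_sol V z \<phi> \<phi>'"
    and W: "u t * \<phi>' t - u' t * \<phi> t = 1"
    and A: "(A has_vector_derivative u t * \<phi> t) (at t)"
    and B: "(B has_vector_derivative - (u t * u t)) (at t)"
  shows "((\<lambda>t. A t * u t + B t * \<phi> t) has_vector_derivative A t * u' t + B t * \<phi>' t) (at t)"
    and "((\<lambda>t. A t * u' t + B t * \<phi>' t) has_vector_derivative
          (complex_of_real (V t) - z) * (A t * u t + B t * \<phi> t) - u t) (at t)"
proof -
  have du: "(u has_vector_derivative u' t) (at t)"
      "(u' has_vector_derivative (complex_of_real (V t) - z) * u t) (at t)"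
    and d\<phi>: "(\<phi> has_vector_derivative \<phi>' t) (at t)"
      "(\<phi>' has_vector_derivative (complex_of_real (V t) - z) * \<phi> t) (at t)"
    using u \<phi> unfolding schr_sol_def by auto
  show "((\<lambda>t. A t * u t + B t * \<phi> t) has_vector_derivative A t * u' t + B t * \<phi>' t) (at t)"
    using A B du d\<phi> by (auto intro!: derivative_eq_intros simp: algebra_simps)
  have "A t * ((complex_of_real (V t) - z) * u t) + u t * \<phi> t * u' t
      + (B t * ((complex_of_real (V t) - z) * \<phi> t) - u t * u t * \<phi>' t)
      = (complex_of_real (V t) - z) * (A t * u t + B t * \<phi> t) - u t * (u t * \<phi>' t - u' t * \<phi> t)"
    by (simp add: algebra_simps)
  with W show "((\<lambda>t. A t * u' t + B t * \<phi>' t) has_vector_derivative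
      (complex_of_real (V t) - z) * (A t * u t + B t * \<phi> t) - u t) (at t)"
    using A B du d\<phi> by (auto intro!: derivative_eq_intros)
qed

lemma norm_outgoing_combination_lower:
  fixes f f' s \<delta> :: real and a a' :: complex
  assumes W: "a * of_real f' - a' * of_real f = 1" and a: "cmod a \<le> \<delta>" "cmod a' \<le> \<delta>"
    and s: "0 < s"
  shows "min 1 s / (2 * \<delta>) \<le> cmod (of_real f' - \<i> * of_real s * of_real f)"
proof -
  define m where "m = min 1 s"
  define T where "T = cmod (of_real f' - \<i> * of_real s * of_real f)"
  have "1 = cmod (a * of_real f' - a' * of_real f)" using W by simp
  also have "\<dots> \<le> cmod a * \<bar>f'\<bar> + cmod a' * \<bar>f\<bar>"
    using norm_triangle_ineq4[of "a * of_real f'" "a' * of_real f"] by (simp add: norm_mult)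
  also have "\<dots> \<le> \<delta> * (\<bar>f\<bar> + \<bar>f'\<bar>)"
    using mult_right_mono[OF a(1), of "\<bar>f'\<bar>"] mult_right_mono[OF a(2), of "\<bar>f\<bar>"]
    by (simp add: algebra_simps)
  finally have one: "1 \<le> \<delta> * (\<bar>f\<bar> + \<bar>f'\<bar>)" .
  then have \<delta>: "0 < \<delta>" by (smt (verit) abs_ge_zero mult_nonpos_nonneg)
  \<comment> \<open>real and imaginary parts of the combination are \<open>f'\<close> and \<open>- s * f\<close>\<close>
  have "\<bar>f'\<bar> \<le> T" "s * \<bar>f\<bar> \<le> T"
    using abs_Re_le_cmod[of "of_real f' - \<i> * of_real s * of_real f"]
      abs_Im_le_cmod[of "of_real f' - \<i> * of_real s * of_real f"] s
    by (simp_all add: T_def abs_mult)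
  moreover have "m \<le> 1" "0 < m" "m \<le> s" using s by (auto simp: m_def)
  ultimately have "m * \<bar>f'\<bar> \<le> T" "m * \<bar>f\<bar> \<le> T"
    using mult_left_le_one_le[of "\<bar>f'\<bar>" m] mult_right_mono[of m s "\<bar>f\<bar>"] by auto
  then have "\<delta> * (m * (\<bar>f\<bar> + \<bar>f'\<bar>)) \<le> \<delta> * (2 * T)"
    using \<delta> by (intro mult_left_mono) (auto simp: distrib_left)
  moreover have "m \<le> \<delta> * (m * (\<bar>f\<bar> + \<bar>f'\<bar>))"
    using mult_left_mono[OF one, of m] \<open>0 < m\<close> by (simp add: mult_ac)
  ultimately have "m \<le> 2 * T * \<delta>" by (simp add: mult_ac)
  then show ?thesis using \<delta> by (simp add: m_def T_def divide_le_eq mult_ac)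
qed

lemma norm_dominant_product_lower:
  fixes B P1 P2 T1 T2 :: complex
  assumes B: "m \<le> cmod B"
    and P: "a * e \<le> cmod P1" "a * e \<le> cmod P2" "cmod P1 \<le> c * e" "cmod P2 \<le> c * e"
    and T: "cmod T1 * e \<le> Q" "cmod T2 * e \<le> Q" and "0 \<le> m" "0 \<le> a" "0 < e"
  shows "m * a^2 * e^2 - 2 * c * Q \<le> cmod (B * P1 * P2 + P1 * T1 - T2 * P2)"
proof -
  have c: "0 \<le> c" using P(1,3) assms(9,10) by (smt (verit) mult_nonneg_nonneg zero_le_mult_iff)
  have "m * a^2 * e^2 \<le> cmod (B * P1 * P2)"
    using mult_mono[OF mult_mono[OF B P(1)] P(2)] assms(8-10)
    by (simp add: norm_mult power2_eq_square mult_ac)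
  moreover have "cmod (P * T) \<le> c * Q" if "cmod P \<le> c * e" "cmod T * e \<le> Q" for P T
  proof -
    have "cmod (P * T) \<le> c * e * cmod T" using mult_right_mono[OF that(1)] by (simp add: norm_mult)
    also have "\<dots> \<le> c * Q" using mult_left_mono[OF that(2) c] by (simp add: mult_ac)
    finally show ?thesis .
  qed
  then have "cmod (P1 * T1) \<le> c * Q" "cmod (T2 * P2) \<le> c * Q"
    using P(3,4) T by (auto simp: mult.commute)
  moreover have "cmod (B * P1 * P2) - cmod (P1 * T1) - cmod (T2 * P2)
      \<le> cmod (B * P1 * P2 + P1 * T1 - T2 * P2)"
    using norm_triangle_ineq2[of "B * P1 * P2 + P1 * T1" "T2 * P2"]
      norm_triangle_ineq2[of "B * P1 * P2" "- (P1 * T1)"] by simp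
  ultimately show ?thesis by linarith
qed

lemma eventually_exp_le_quadratic_exp:
  fixes \<alpha> \<beta> \<gamma> k :: real
  assumes "0 < \<alpha>" "0 < k" "0 \<le> \<beta>" "0 \<le> \<gamma>"
  shows "\<forall>\<^sub>F M in at_top. exp (k * M) \<le> \<alpha> * exp (k * M)^2 - \<beta> * M - \<gamma>"
  unfolding eventually_at_top_linorder
proof (intro exI allI impI)
  fix M assume "max 1 (2 * (\<beta> + \<gamma> + 1) / (\<alpha> * k^2)) \<le> M"
  then have M: "1 \<le> M" "2 * (\<beta> + \<gamma> + 1) \<le> M * (\<alpha> * k^2)"
    using assms by (auto simp: divide_le_eq mult.commute)
  have kM: "0 \<le> k * M" using assms M by simp
  have "\<beta> * M + \<gamma> + 1 \<le> (\<beta> + \<gamma> + 1) * M"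
    using M mult_right_mono[OF M(1) assms(4)] by (simp add: algebra_simps)
  also have "\<dots> \<le> \<alpha> * ((k * M)^2 / 2)"
    using mult_right_mono[OF M(2), of M] M by (simp add: power2_eq_square algebra_simps)
  also have "\<dots> \<le> \<alpha> * exp (k * M)"
    using exp_lower_Taylor_quadratic[OF kM] kM assms(1) by (intro mult_left_mono) auto
  finally have lin: "\<beta> * M + \<gamma> + 1 \<le> \<alpha> * exp (k * M)" .
  have e: "1 \<le> exp (k * M)" using kM by simp
  have "0 \<le> \<beta> * M + \<gamma>" using assms M by simp
  from mult_right_mono[OF e this] mult_left_mono[OF lin, of "exp (k * M)"]
  have "\<beta> * M + \<gamma> \<le> exp (k * M) * (\<beta> * M + \<gamma>)"
    and "exp (k * M) * (\<beta> * M + \<gamma> + 1) \<le> exp (k * M) * (\<alpha> * exp (k * M))"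
    by simp_all
  then show "exp (k * M) \<le> \<alpha> * exp (k * M)^2 - \<beta> * M - \<gamma>"
    by (simp add: power2_eq_square algebra_simps)
qed

lemma norm_antiderivative_le:
  fixes A f :: "real \<Rightarrow> 'a::real_normed_vector"
  assumes A: "\<And>t. \<bar>t\<bar> < R \<Longrightarrow> (A has_vector_derivative f t) (at t)"
    and f: "\<And>t. \<bar>t\<bar> < R \<Longrightarrow> norm (f t) \<le> C"
    and A0: "A 0 = 0" and t: "\<bar>t\<bar> < R"
  shows "norm (A t) \<le> C * \<bar>t\<bar>"
proof -
  have "norm (A t - A 0) \<le> C * norm (t - 0)"
  proof (rule differentiable_bound[where S = "{- R<..<R}" and f' = "\<lambda>t h. h *\<^sub>R f t"])
    fix x assume "x \<in> {- R<..<R}"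
    then have x: "\<bar>x\<bar> < R" by auto
    show "(A has_derivative (\<lambda>h. h *\<^sub>R f x)) (at x within {- R<..<R})"
      using A[OF x] by (simp add: has_vector_derivative_def has_derivative_at_withinI)
    show "onorm (\<lambda>h. h *\<^sub>R f x) \<le> C"
      using f[OF x] by (simp add: onorm_scaleR_left[OF bounded_linear_ident] onorm_id)
  qed (use t in auto)
  then show ?thesis using A0 by simp
qed

section \<open>The eigenfunction family\<close>

text \<open>Both normalisations of the theorem (\<open>\<Phi> 0 \<noteq> 0\<close> or \<open>\<Phi> 0 = 0\<close>) are instances of this
  family; the eigenfunction enters only through \<open>u0 = u w\<eta> E\<close> and its decay bound.\<close>

locale eigenfunction_family =
  fixes V :: "real \<Rightarrow> real" and E :: real
    and u u' :: "complex \<Rightarrow> complex \<Rightarrow> real \<Rightarrow> complex" and w\<eta> :: complex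
    and p0 p1 q0 q1 :: real and v v' :: "real \<Rightarrow> complex" and C0 k :: real
  assumes V_cont: "continuous_on UNIV V"
    and E_pos: "0 < E"
    and u_sol: "\<And>w z. schr_sol V z (u w z) (u' w z)"
    and u_init: "\<And>w z. u w z 0 = of_real p0 + w * of_real p1"
      "\<And>w z. u' w z 0 = of_real q0 + w * of_real q1"
    and init_det: "p0 * q1 - q0 * p1 = 1"
    and w\<eta>_real: "Im w\<eta> = 0"
    and u_decay: "\<And>x. norm (u w\<eta> E x) \<le> C0 * exp (- k * \<bar>x\<bar>)"
      "\<And>x. norm (u' w\<eta> E x) \<le> C0 * exp (- k * \<bar>x\<bar>)"
    and v_sol: "schr_sol V E v v'"
    and v_wronskian: "u w\<eta> E 0 * v' 0 - u' w\<eta> E 0 * v 0 = 1"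
    and v_growth: "\<And>x. norm (v x) \<le> C0 * exp (k * \<bar>x\<bar>)"
      "\<And>x. norm (v' x) \<le> C0 * exp (k * \<bar>x\<bar>)"
    and C0_pos: "0 < C0" and k_pos: "0 < k"
begin

abbreviation u0 :: "real \<Rightarrow> complex" where "u0 \<equiv> u w\<eta> E"
abbreviation u0' :: "real \<Rightarrow> complex" where "u0' \<equiv> u' w\<eta> E"
definition \<phi> :: "real \<Rightarrow> complex" where "\<phi> = (\<lambda>x. u (w\<eta> + 1) E x - u0 x)"
definition \<phi>' :: "real \<Rightarrow> complex" where "\<phi>' = (\<lambda>x. u' (w\<eta> + 1) E x - u0' x)"

lemma u0_sol: "schr_sol V E u0 u0'"
  by (rule u_sol)

lemma \<phi>_sol: "schr_sol V E \<phi> \<phi>'"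
  using schr_sol_lincomb[OF u_sol[where w = "w\<eta> + 1" and z = E] u0_sol, of 1 "- 1"]
  by (simp add: \<phi>_def \<phi>'_def)

lemma \<phi>_init: "\<phi> 0 = of_real p1" "\<phi>' 0 = of_real q1"
  by (simp_all add: \<phi>_def \<phi>'_def u_init algebra_simps)

lemma wronskian_u0_\<phi>: "u0 x * \<phi>' x - u0' x * \<phi> x = 1"
proof -
  have "u0 0 * \<phi>' 0 - u0' 0 * \<phi> 0
      = (of_real p0 + w\<eta> * of_real p1) * of_real q1 - (of_real q0 + w\<eta> * of_real q1) * of_real p1"
    by (simp add: \<phi>_init u_init)
  also have "\<dots> = of_real (p0 * q1 - q0 * p1)" by (simp add: algebra_simps)
  finally show ?thesis
    using schr_sol_wronskian_const[OF u0_sol \<phi>_sol, of x] by (simp add: init_det)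
qed

lemma u_affine_in_w:
  "u w E x = u0 x + (w - w\<eta>) * \<phi> x" "u' w E x = u0' x + (w - w\<eta>) * \<phi>' x"
  using schr_sol_unique[OF V_cont u_sol schr_sol_lincomb[OF u0_sol \<phi>_sol, of 1 "w - w\<eta>"]]
  by (simp_all add: \<phi>_init u_init algebra_simps)

lemma u0_real: "Im (u0 x) = 0 \<and> Im (u0' x) = 0"
  by (rule schr_sol_real[OF V_cont u0_sol]) (simp_all add: u_init w\<eta>_real)

lemma \<phi>_real: "Im (\<phi> x) = 0 \<and> Im (\<phi>' x) = 0"
  by (rule schr_sol_real[OF V_cont \<phi>_sol]) (simp_all add: \<phi>_init)

definition C\<phi> :: real where "C\<phi> = (1 + cmod (\<phi> 0 * v' 0 - \<phi>' 0 * v 0)) * C0"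

lemma C\<phi>_pos: "0 < C\<phi>"
  using C0_pos by (simp add: C\<phi>_def add_pos_nonneg)

lemma \<phi>_growth: "norm (\<phi> x) \<le> C\<phi> * exp (k * \<bar>x\<bar>) \<and> norm (\<phi>' x) \<le> C\<phi> * exp (k * \<bar>x\<bar>)"
proof -
  define c where "c = \<phi> 0 * v' 0 - \<phi>' 0 * v 0"
  have "norm (c * y + w) \<le> C\<phi> * exp (k * \<bar>x\<bar>)"
    if y: "norm y \<le> C0 * exp (- k * \<bar>x\<bar>)" and w: "norm w \<le> C0 * exp (k * \<bar>x\<bar>)" for y w
  proof -
    have "C0 * exp (- k * \<bar>x\<bar>) \<le> C0 * exp (k * \<bar>x\<bar>)"
      using C0_pos k_pos by simp
    have "norm (c * y + w) \<le> cmod c * norm y + norm w"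
      by (metis norm_mult norm_triangle_ineq)
    also have "\<dots> \<le> cmod c * (C0 * exp (k * \<bar>x\<bar>)) + C0 * exp (k * \<bar>x\<bar>)"
      using y w \<open>C0 * exp (- k * \<bar>x\<bar>) \<le> _\<close> by (intro add_mono mult_left_mono) auto
    finally have "norm (c * y + w) \<le> cmod c * (C0 * exp (k * \<bar>x\<bar>)) + C0 * exp (k * \<bar>x\<bar>)" .
    then show ?thesis by (simp add: C\<phi>_def c_def algebra_simps)
  qed
  moreover have "\<phi> x = c * u0 x + v x \<and> \<phi>' x = c * u0' x + v' x"
    using schr_sol_expansion[OF V_cont u0_sol v_sol \<phi>_sol, of x] v_wronskian wronskian_u0_\<phi>[of 0]
    by (simp add: c_def)
  ultimately show ?thesis
    using u_decay v_growth by simp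
qed

definition \<Theta>u0 :: "real \<Rightarrow> complex" where "\<Theta>u0 x = u0' x - \<i> * csqrt E * u0 x"
definition \<Theta>\<phi> :: "real \<Rightarrow> complex" where "\<Theta>\<phi> x = \<phi>' x - \<i> * csqrt E * \<phi> x"

lemma deriv_Theta_w: "deriv (\<lambda>w. Theta u u' x w E) w\<eta> = \<Theta>\<phi> x"
proof -
  have "Theta u u' x w E = u0' x - \<i> * csqrt E * u0 x + (w - w\<eta>) * \<Theta>\<phi> x" for w
    unfolding Theta_def u_affine_in_w[of w x] \<Theta>\<phi>_def by (simp add: algebra_simps)
  moreover have "((\<lambda>w. u0' x - \<i> * csqrt E * u0 x + (w - w\<eta>) * \<Theta>\<phi> x)
      has_field_derivative \<Theta>\<phi> x) (at w\<eta>)"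
    by (auto intro!: derivative_eq_intros)
  ultimately show ?thesis by (simp add: DERIV_imp_deriv)
qed

text \<open>Coefficients of \<open>\<partial>\<^sub>z u\<close> in the basis \<open>u0, \<phi>\<close>; the integrals start at \<open>- R\<close> so that
  they are differentiable on \<open>\<bar>t\<bar> < R\<close>.\<close>
definition coef_a :: "real \<Rightarrow> real \<Rightarrow> complex" where
  "coef_a R t = integral {- R..t} (\<lambda>s. u0 s * \<phi> s) - integral {- R..0} (\<lambda>s. u0 s * \<phi> s)"
definition coef_b :: "real \<Rightarrow> real \<Rightarrow> complex" where
  "coef_b R t = integral {- R..0} (\<lambda>s. u0 s * u0 s) - integral {- R..t} (\<lambda>s. u0 s * u0 s)"

lemma continuous_on_u0_products:
  "continuous_on UNIV (\<lambda>s. u0 s * \<phi> s)" "continuous_on UNIV (\<lambda>s. u0 s * u0 s)"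
  using schr_sol_continuous[OF u0_sol] schr_sol_continuous[OF \<phi>_sol]
  by (auto intro!: continuous_intros)

lemma coef_a_has_vector_derivative:
  "\<bar>t\<bar> < R \<Longrightarrow> (coef_a R has_vector_derivative u0 t * \<phi> t) (at t)"
  using has_vector_derivative_integral_from[OF continuous_on_u0_products(1)]
  unfolding coef_a_def[abs_def] by (auto intro!: derivative_eq_intros)

lemma coef_b_has_vector_derivative:
  "\<bar>t\<bar> < R \<Longrightarrow> (coef_b R has_vector_derivative - (u0 t * u0 t)) (at t)"
  using has_vector_derivative_integral_from[OF continuous_on_u0_products(2)]
  unfolding coef_b_def[abs_def] by (auto intro!: derivative_eq_intros)

lemma u_has_field_derivative_z:
  assumes x: "\<bar>x\<bar> < R"
  shows "((\<lambda>z. u w\<eta> z x) has_field_derivative coef_a R x * u0 x + coef_b R x * \<phi> x) (at E)"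
    and "((\<lambda>z. u' w\<eta> z x) has_field_derivative coef_a R x * u0' x + coef_b R x * \<phi>' x) (at E)"
proof -
  have t: "\<bar>t\<bar> < R" if "\<bar>t\<bar> \<le> \<bar>x\<bar>" for t using x that by linarith
  note vp = variation_of_parameters[OF u0_sol \<phi>_sol wronskian_u0_\<phi>
      coef_a_has_vector_derivative[OF t] coef_b_has_vector_derivative[OF t]]
  have init: "coef_a R 0 = 0" "coef_b R 0 = 0" by (simp_all add: coef_a_def coef_b_def)
  show "((\<lambda>z. u w\<eta> z x) has_field_derivative coef_a R x * u0 x + coef_b R x * \<phi> x) (at E)"
    by (rule schr_sol_has_field_derivative_z(1)[OF V_cont u_sol _ _ vp _ _ order.refl])
      (simp_all add: u_init init)
  show "((\<lambda>z. u' w\<eta> z x) has_field_derivative coef_a R x * u0' x + coef_b R x * \<phi>' x) (at E)"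
    by (rule schr_sol_has_field_derivative_z(2)[OF V_cont u_sol _ _ vp _ _ order.refl])
      (simp_all add: u_init init)
qed

definition decaying_part :: "real \<Rightarrow> real \<Rightarrow> complex" where
  "decaying_part R x = coef_a R x * \<Theta>u0 x - \<i> / (2 * csqrt E) * u0 x"

lemma deriv_Theta_z:
  assumes "\<bar>x\<bar> < R"
  shows "deriv (\<lambda>z. Theta u u' x w\<eta> z) E = coef_b R x * \<Theta>\<phi> x + decaying_part R x"
proof -
  have "(csqrt has_field_derivative inverse (2 * csqrt E)) (at E)"
    by (rule has_field_derivative_csqrt) (use E_pos in \<open>simp add: complex_nonpos_Reals_iff\<close>)
  from DERIV_diff[OF u_has_field_derivative_z(2)[OF assms]
      DERIV_cmult[OF DERIV_mult[OF this u_has_field_derivative_z(1)[OF assms]], of \<i>]]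
  have "((\<lambda>z. Theta u u' x w\<eta> z) has_field_derivative
      coef_a R x * u0' x + coef_b R x * \<phi>' x
      - \<i> * (inverse (2 * csqrt E) * u0 x + (coef_a R x * u0 x + coef_b R x * \<phi> x) * csqrt E)) (at E)"
    unfolding Theta_def mult.assoc .
  moreover have "coef_a R x * u0' x + coef_b R x * \<phi>' x
      - \<i> * (inverse (2 * csqrt E) * u0 x + (coef_a R x * u0 x + coef_b R x * \<phi> x) * csqrt E)
      = coef_b R x * \<Theta>\<phi> x + decaying_part R x"
    unfolding decaying_part_def \<Theta>u0_def \<Theta>\<phi>_def divide_inverse by (simp add: algebra_simps)
  ultimately show ?thesis by (simp add: DERIV_imp_deriv)
qed

lemma Ncal_expansion:
  assumes "0 \<le> M" "M < R"
  shows "Ncal (Theta u u' M) (Theta u u' (- M)) w\<eta> E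
    = (coef_b R (- M) - coef_b R M) * \<Theta>\<phi> M * \<Theta>\<phi> (- M)
      + \<Theta>\<phi> M * decaying_part R (- M) - decaying_part R M * \<Theta>\<phi> (- M)"
  using deriv_Theta_z[of M R] deriv_Theta_z[of "- M" R] assms
  unfolding Ncal_def deriv_Theta_w by (simp add: algebra_simps)

lemma coef_b_diff_eq_integral:
  assumes "0 \<le> M" "M \<le> R"
  shows "coef_b R (- M) - coef_b R M = integral {- M..M} (\<lambda>s. u0 s * u0 s)"
  using Henstock_Kurzweil_Integration.integral_combine[where a = "- R" and c = "- M" and b = M
      and f = "\<lambda>s. u0 s * u0 s"] assms
    integrable_continuous_interval[OF continuous_on_subset[OF continuous_on_u0_products(2)]]
  by (simp add: coef_b_def algebra_simps)

lemma \<Theta>\<phi>_lower: "min 1 (sqrt E) / (2 * C0) * exp (k * \<bar>x\<bar>) \<le> cmod (\<Theta>\<phi> x)"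
proof -
  have W: "u0 x * of_real (Re (\<phi>' x)) - u0' x * of_real (Re (\<phi> x)) = 1"
    using wronskian_u0_\<phi>[of x] \<phi>_real[of x] by (simp add: complex_eq_iff)
  have "of_real (Re (\<phi>' x)) - \<i> * of_real (sqrt E) * of_real (Re (\<phi> x)) = \<Theta>\<phi> x"
    using E_pos \<phi>_real[of x] by (simp add: \<Theta>\<phi>_def complex_eq_iff)
  with norm_outgoing_combination_lower[OF W u_decay(1)[of x] u_decay(2)[of x], where s = "sqrt E"] E_pos
  have "min 1 (sqrt E) / (2 * (C0 * exp (- k * \<bar>x\<bar>))) \<le> cmod (\<Theta>\<phi> x)"
    by simp
  then show ?thesis by (simp add: exp_minus field_simps)
qed

lemma norm_outgoing_le: "cmod (y' - \<i> * csqrt E * y) \<le> cmod y' + sqrt E * cmod y"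
  using norm_triangle_ineq4[of y' "\<i> * csqrt E * y"] E_pos by (simp add: norm_mult)

lemma \<Theta>\<phi>_upper: "cmod (\<Theta>\<phi> x) \<le> (1 + sqrt E) * C\<phi> * exp (k * \<bar>x\<bar>)"
proof -
  have "cmod (\<Theta>\<phi> x) \<le> cmod (\<phi>' x) + sqrt E * cmod (\<phi> x)"
    unfolding \<Theta>\<phi>_def by (rule norm_outgoing_le)
  also have "\<dots> \<le> C\<phi> * exp (k * \<bar>x\<bar>) + sqrt E * (C\<phi> * exp (k * \<bar>x\<bar>))"
    using \<phi>_growth[of x] E_pos by (intro add_mono mult_left_mono) auto
  finally show ?thesis by (simp add: algebra_simps)
qed

lemma \<Theta>u0_upper: "cmod (\<Theta>u0 x) \<le> (1 + sqrt E) * C0 * exp (- k * \<bar>x\<bar>)"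
proof -
  have "cmod (\<Theta>u0 x) \<le> cmod (u0' x) + sqrt E * cmod (u0 x)"
    unfolding \<Theta>u0_def by (rule norm_outgoing_le)
  also have "\<dots> \<le> C0 * exp (- k * \<bar>x\<bar>) + sqrt E * (C0 * exp (- k * \<bar>x\<bar>))"
    using u_decay[of x] E_pos by (intro add_mono mult_left_mono) auto
  finally show ?thesis by (simp add: algebra_simps)
qed

lemma coef_a_bound:
  assumes "\<bar>t\<bar> < R"
  shows "cmod (coef_a R t) \<le> C0 * C\<phi> * \<bar>t\<bar>"
proof (rule norm_antiderivative_le[OF coef_a_has_vector_derivative _ _ assms])
  fix s :: real
  have "cmod (u0 s * \<phi> s) \<le> C0 * exp (- k * \<bar>s\<bar>) * (C\<phi> * exp (k * \<bar>s\<bar>))"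
    unfolding norm_mult using u_decay(1)[of s] \<phi>_growth[of s] C0_pos by (intro mult_mono) auto
  also have "\<dots> = C0 * C\<phi> * (exp (- k * \<bar>s\<bar>) * exp (k * \<bar>s\<bar>))" by (simp add: mult_ac)
  finally show "cmod (u0 s * \<phi> s) \<le> C0 * C\<phi>" by (simp flip: exp_add)
qed (auto simp: coef_a_def)

lemma decaying_part_bound:
  assumes "\<bar>x\<bar> < R"
  shows "cmod (decaying_part R x) * exp (k * \<bar>x\<bar>)
    \<le> C0 * C\<phi> * \<bar>x\<bar> * ((1 + sqrt E) * C0) + C0 / (2 * sqrt E)"
proof -
  have "cmod (decaying_part R x) \<le> cmod (coef_a R x) * cmod (\<Theta>u0 x) + cmod (u0 x) / (2 * sqrt E)"
    using norm_triangle_ineq4[of "coef_a R x * \<Theta>u0 x" "\<i> / (2 * csqrt E) * u0 x"] E_pos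
    by (simp add: decaying_part_def norm_mult norm_divide)
  also have "\<dots> \<le> (C0 * C\<phi> * \<bar>x\<bar>) * ((1 + sqrt E) * C0 * exp (- k * \<bar>x\<bar>))
      + C0 * exp (- k * \<bar>x\<bar>) / (2 * sqrt E)"
    using coef_a_bound[OF assms] \<Theta>u0_upper[of x] u_decay(1)[of x] E_pos C0_pos C\<phi>_pos
    by (intro add_mono mult_mono divide_right_mono) auto
  also have "\<dots> = (C0 * C\<phi> * \<bar>x\<bar> * ((1 + sqrt E) * C0) + C0 / (2 * sqrt E)) * exp (- k * \<bar>x\<bar>)"
    by (simp add: algebra_simps)
  finally have "cmod (decaying_part R x) * exp (k * \<bar>x\<bar>)
      \<le> (C0 * C\<phi> * \<bar>x\<bar> * ((1 + sqrt E) * C0) + C0 / (2 * sqrt E)) * exp (- k * \<bar>x\<bar>) * exp (k * \<bar>x\<bar>)"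
    by (rule mult_right_mono) simp
  then show ?thesis by (simp add: mult.assoc flip: exp_add)
qed

lemma u0_nonzero: "\<exists>x. u0 x \<noteq> 0"
proof (rule ccontr)
  assume "\<not> (\<exists>x. u0 x \<noteq> 0)"
  then have u0_zero: "u0 = (\<lambda>_. 0)" by auto
  then have "((\<lambda>_. 0) has_vector_derivative u0' 0) (at 0)"
    using u0_sol unfolding schr_sol_def by metis
  then have "u0' 0 = 0"
    using vector_derivative_unique_at has_vector_derivative_const by blast
  then show False using wronskian_u0_\<phi>[of 0] u0_zero by simp
qed

lemma eventually_integral_u0_square_lower:
  obtains m where "0 < m" "\<forall>\<^sub>F M in at_top. m \<le> cmod (integral {- M..M} (\<lambda>s. u0 s * u0 s))"
proof -
  define r where "r s = Re (u0 s)" for s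
  have u0_r: "u0 s * u0 s = of_real (r s ^ 2)" for s
    using u0_real[of s] by (simp add: r_def complex_eq_iff power2_eq_square)
  have r_cont: "continuous_on S (\<lambda>s. r s ^ 2)" for S
    unfolding r_def using schr_sol_continuous(1)[OF u0_sol] by (intro continuous_intros)
  have r_int: "(\<lambda>s. r s ^ 2) integrable_on {a..b}" for a b
    by (rule integrable_continuous_interval[OF r_cont])
  have integral_eq: "integral {- M..M} (\<lambda>s. u0 s * u0 s) = of_real (integral {- M..M} (\<lambda>s. r s ^ 2))" for M
    unfolding u0_r by (rule integral_unique[OF has_integral_of_real[OF integrable_integral[OF r_int]]])
  obtain x0 where x0: "u0 x0 \<noteq> 0" using u0_nonzero by blast
  define T where "T = \<bar>x0\<bar> + 1"
  define m where "m = integral {- T..T} (\<lambda>s. r s ^ 2)"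
  have "m \<noteq> 0"
  proof
    assume "m = 0"
    then have "((\<lambda>s. r s ^ 2) has_integral 0) (cbox (- T) T)"
      using integrable_integral[OF r_int[of "- T" T]] by (simp add: m_def cbox_interval)
    then have "r x0 ^ 2 = 0"
      by (rule has_integral_0_cbox_imp_0[of "- T" T _ x0, rotated 2]) (auto simp: r_cont T_def)
    then show False using x0 u0_real[of x0] by (simp add: r_def complex_eq_iff)
  qed
  moreover have "0 \<le> m" unfolding m_def by (rule integral_nonneg[OF r_int]) simp
  ultimately have "0 < m" by simp
  moreover have "\<forall>\<^sub>F M in at_top. m \<le> cmod (integral {- M..M} (\<lambda>s. u0 s * u0 s))"
    unfolding eventually_at_top_linorder
  proof (intro exI allI impI)
    fix M assume "T \<le> M"
    then have "m \<le> integral {- M..M} (\<lambda>s. r s ^ 2)"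
      unfolding m_def by (intro integral_subset_le r_int) auto
    then show "m \<le> cmod (integral {- M..M} (\<lambda>s. u0 s * u0 s))"
      unfolding integral_eq by simp
  qed
  ultimately show thesis by (rule that)
qed

lemma eventually_exp_le_norm_Ncal:
  "\<forall>\<^sub>F M in at_top. exp (k * M) \<le> norm (Ncal (Theta u u' M) (Theta u u' (- M)) w\<eta> E)"
proof -
  obtain m where m: "0 < m" "\<forall>\<^sub>F M in at_top. m \<le> cmod (integral {- M..M} (\<lambda>s. u0 s * u0 s))"
    by (rule eventually_integral_u0_square_lower)
  define a where "a = min 1 (sqrt E) / (2 * C0)"
  have a: "0 < a" using C0_pos E_pos by (simp add: a_def)
  define c where "c = (1 + sqrt E) * C\<phi>"
  define Q where "Q M = C0 * C\<phi> * M * ((1 + sqrt E) * C0) + C0 / (2 * sqrt E)" for M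
  have lower: "m * a^2 * exp (k * M)^2 - 2 * c * Q M \<le> norm (Ncal (Theta u u' M) (Theta u u' (- M)) w\<eta> E)"
    if M: "0 \<le> M" and m_le: "m \<le> cmod (integral {- M..M} (\<lambda>s. u0 s * u0 s))" for M
  proof -
    have R: "\<bar>M\<bar> < M + 1" "\<bar>- M\<bar> < M + 1" using M by auto
    show ?thesis
      unfolding Ncal_expansion[OF M less_add_one]
    proof (rule norm_dominant_product_lower)
      show "m \<le> cmod (coef_b (M + 1) (- M) - coef_b (M + 1) M)"
        using m_le M by (simp add: coef_b_diff_eq_integral)
      show "a * exp (k * M) \<le> cmod (\<Theta>\<phi> M)" "a * exp (k * M) \<le> cmod (\<Theta>\<phi> (- M))"
        using \<Theta>\<phi>_lower[of M] \<Theta>\<phi>_lower[of "- M"] M by (simp_all add: a_def)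
      show "cmod (\<Theta>\<phi> M) \<le> c * exp (k * M)" "cmod (\<Theta>\<phi> (- M)) \<le> c * exp (k * M)"
        using \<Theta>\<phi>_upper[of M] \<Theta>\<phi>_upper[of "- M"] M by (simp_all add: c_def)
      show "cmod (decaying_part (M + 1) (- M)) * exp (k * M) \<le> Q M"
        "cmod (decaying_part (M + 1) M) * exp (k * M) \<le> Q M"
        using decaying_part_bound[OF R(2)] decaying_part_bound[OF R(1)] M by (simp_all add: Q_def)
    qed (use m a in auto)
  qed
  have "\<forall>\<^sub>F M in at_top. exp (k * M) \<le> m * a^2 * exp (k * M)^2
      - (2 * c * (C0 * C\<phi> * ((1 + sqrt E) * C0))) * M - 2 * c * (C0 / (2 * sqrt E))"
    using C0_pos C\<phi>_pos E_pos k_pos m a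
    by (intro eventually_exp_le_quadratic_exp) (auto simp: c_def)
  from this eventually_conj[OF m(2) eventually_ge_at_top[of 0]] show ?thesis
  proof eventually_elim
    case (elim M)
    then show ?case using lower[of M] by (simp add: Q_def algebra_simps)
  qed
qed

end

theorem lemma3p1:
  fixes V Vper Vdef :: "real \<Rightarrow> real" and \<rho> E :: real
    and \<Phi> \<Phi>' :: "real \<Rightarrow> real"
    and u u' :: "complex \<Rightarrow> complex \<Rightarrow> real \<Rightarrow> complex"
    and v v' :: "real \<Rightarrow> complex"
    and w\<eta> :: complex and C0 k :: real
  assumes V_smooth: "smooth_real V"
    and V_dec: "\<And>x. V x = Vper x + Vdef x"
    and Vper_per: "\<And>x. Vper (x + 1) = Vper x"
    and rho: "\<rho> \<ge> 0"
    and Vdef_supp: "\<And>x. \<bar>x\<bar> > \<rho> \<Longrightarrow> Vdef x = 0"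
    and E_pos: "E > 0"
    and Phi_d1: "\<And>x. (\<Phi> has_real_derivative \<Phi>' x) (at x)"
    and Phi_d2: "\<And>x. (\<Phi>' has_real_derivative ((V x - E) * \<Phi> x)) (at x)"
    and Phi_L2: "(\<lambda>x. (\<Phi> x)\<^sup>2) integrable_on UNIV"
    and Phi_nz: "\<exists>x. \<Phi> x \<noteq> 0"
    and Phi_norm: "\<Phi> 0 \<noteq> 0 \<longrightarrow> \<Phi> 0 = 1" "\<Phi> 0 = 0 \<longrightarrow> \<Phi>' 0 = 1"
    and w\<eta>_def: "w\<eta> = (if \<Phi> 0 \<noteq> 0 then complex_of_real (\<Phi>' 0) else 0)"
    and u_sol: "\<And>w z. schr_sol V z (u w z) (u' w z)"
    and u_init: "\<And>w z. u w z 0 = (if \<Phi> 0 \<noteq> 0 then 1 else - w)"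
                "\<And>w z. u' w z 0 = (if \<Phi> 0 \<noteq> 0 then w else 1)"
    and v_sol: "schr_sol V (complex_of_real E) v v'"
    and v_init: "v 0 = (if \<Phi> 0 \<noteq> 0 then - w\<eta> / (1 + w\<eta>\<^sup>2) else - 1 / (1 + w\<eta>\<^sup>2))"
                "v' 0 = (if \<Phi> 0 \<noteq> 0 then 1 / (1 + w\<eta>\<^sup>2) else - w\<eta> / (1 + w\<eta>\<^sup>2))"
    and C0_pos: "C0 > 0" and k_pos: "k > 0"
    and u_bd: "\<And>x. norm (u w\<eta> (complex_of_real E) x) \<le> C0 * exp (- k * \<bar>x\<bar>)"
              "\<And>x. norm (u' w\<eta> (complex_of_real E) x) \<le> C0 * exp (- k * \<bar>x\<bar>)"
    and v_bd: "\<And>x. norm (v x) \<le> C0 * exp (k * \<bar>x\<bar>)"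
              "\<And>x. norm (v' x) \<le> C0 * exp (k * \<bar>x\<bar>)"
  shows "\<exists>C > 0. \<exists>M0 > \<rho>. \<forall>M \<ge> M0.
           norm (Ncal (Theta u u' M) (Theta u u' (- M)) w\<eta> (complex_of_real E)) \<ge> C * exp (k * M)"
proof -
  define P where "P \<longleftrightarrow> \<Phi> 0 \<noteq> 0"
  have w\<eta>_real: "Im w\<eta> = 0" by (simp add: w\<eta>_def)
  have "1 + w\<eta>\<^sup>2 = of_real (1 + (Re w\<eta>)\<^sup>2)"
    using w\<eta>_real by (simp add: complex_eq_iff power2_eq_square)
  moreover have "1 + (Re w\<eta>)\<^sup>2 \<noteq> 0" using zero_le_power2[of "Re w\<eta>"] by linarith
  ultimately have "1 + w\<eta>\<^sup>2 \<noteq> 0" by (metis of_real_eq_0_iff)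
  then have v_wronskian: "u w\<eta> E 0 * v' 0 - u' w\<eta> E 0 * v 0 = 1"
    using v_init u_init w\<eta>_def by (auto simp: field_simps power2_eq_square)
  interpret eigenfunction_family V E u u' w\<eta>
      "if P then 1 else 0" "if P then 0 else - 1" "if P then 0 else 1" "if P then 1 else 0" v v' C0 k
    by unfold_locales
      (use smooth_real_imp_continuous[OF V_smooth] E_pos u_sol v_sol v_wronskian u_bd v_bd C0_pos k_pos
        w\<eta>_real in \<open>simp_all add: u_init P_def\<close>)
  obtain M1 where M1: "\<forall>M \<ge> M1. exp (k * M) \<le> norm (Ncal (Theta u u' M) (Theta u u' (- M)) w\<eta> E)"
    using eventually_exp_le_norm_Ncal by (auto simp: eventually_at_top_linorder)
  show ?thesis
  proof (intro exI conjI)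
    show "(0::real) < 1" "\<rho> < max M1 (\<rho> + 1)" by simp_all
    show "\<forall>M \<ge> max M1 (\<rho> + 1). 1 * exp (k * M) \<le> norm (Ncal (Theta u u' M) (Theta u u' (- M)) w\<eta> E)"
      using M1 by simp
  qed
qed

end
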